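(* For every $n \ge 1$, $B^-_n(x) = x^n B^+_n(1/x)$.
   Context: A signed permutation of $[n]$ is a set $S = \{a_1, \dots, a_n\}$ with $a_i \in \{i, -i\}$, together with a bijection $w : S \to S$, written as the word $w(a_1) \cdots w(a_n)$. An index $i \in \{0, \dots, n-1\}$ is a $B$-descent if $w(a_i) > w(a_{i+1})$ in $\mathbb{Z}$, with the convention $w(a_0) = 0$; $\mathrm{des}_B(w)$ is the number of $B$-descents. $B^+_n(x)$ (resp. $B^-_n(x)$) is $\sum x^{\mathrm{des}_B(w)}$ over all signed permutations of $[n]$ with $w(a_n) > 0$ (resp. $w(a_n) < 0$). *)

theory Defs
  imports Complex_Main
begin

definition signed_sets :: "nat \<Rightarrow> int set set" where
  "signed_sets n = {S. \<exists>a::nat \<Rightarrow> int. (\<forall>i\<in>{1..n}. a i = int i \<or> a i = - int i) \<and> S = a ` {1..n}}"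

definition signed_perms :: "nat \<Rightarrow> (int set \<times> (int \<Rightarrow> int)) set" where
  "signed_perms n = {(S, w). S \<in> signed_sets n \<and> bij_betw w S S \<and> (\<forall>x. x \<notin> S \<longrightarrow> w x = x)}"

definition sel :: "int set \<Rightarrow> nat \<Rightarrow> int" where
  "sel S i = (THE x. x \<in> S \<and> \<bar>x\<bar> = int i)"

definition letter :: "int set \<times> (int \<Rightarrow> int) \<Rightarrow> nat \<Rightarrow> int" where
  "letter p i = (if i = 0 then 0 else snd p (sel (fst p) i))"

definition desB :: "nat \<Rightarrow> int set \<times> (int \<Rightarrow> int) \<Rightarrow> nat" where
  "desB n p = card {i \<in> {0..<n}. letter p i > letter p (Suc i)}"

definition Bplus :: "nat \<Rightarrow> real \<Rightarrow> real" where
  "Bplus n x = (\<Sum>p\<in>{p \<in> signed_perms n. letter p n > 0}. x ^ desB n p)"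

definition Bminus :: "nat \<Rightarrow> real \<Rightarrow> real" where
  "Bminus n x = (\<Sum>p\<in>{p \<in> signed_perms n. letter p n < 0}. x ^ desB n p)"

end

theory Submission
  imports Defs
begin

text \<open>Negating every entry, \<open>(S, w) \<mapsto> (-S, x \<mapsto> -w(-x))\<close>, is an involution on signed
  permutations that negates every letter of the word. Adjacent letters of a word are distinct
  (including the convention \<open>w(a\<^sub>0) = 0\<close>, as no letter vanishes), so negation turns the
  \<open>B\<close>-descents into exactly the non-descents: \<open>des\<^sub>B\<close> becomes \<open>n - des\<^sub>B\<close>. Since it also swaps
  the sign of the last letter, it maps the permutations counted by \<open>B\<^sup>+\<^sub>n\<close> bijectively onto
  those counted by \<open>B\<^sup>-\<^sub>n\<close>.\<close>

fun neg_perm :: "int set \<times> (int \<Rightarrow> int) \<Rightarrow> int set \<times> (int \<Rightarrow> int)" where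
  "neg_perm (S, w) = (uminus ` S, \<lambda>x. if - x \<in> S then - w (- x) else x)"

lemma signed_permsE:
  assumes "(S, w) \<in> signed_perms n"
  obtains a where "\<forall>i\<in>{1..n}. a i = int i \<or> a i = - int i" "S = a ` {1..n}"
    and "bij_betw w S S" and "\<forall>x. x \<notin> S \<longrightarrow> w x = x"
  using assms that by (auto simp: signed_perms_def signed_sets_def)

lemma sel_image:
  assumes "\<forall>i\<in>{1..n}. a i = int i \<or> a i = - int i" and "i \<in> {1..n}"
  shows "sel (a ` {1..n}) i = a i"
  unfolding sel_def
proof (rule the_equality)
  show "a i \<in> a ` {1..n} \<and> \<bar>a i\<bar> = int i" using assms by force
next
  fix x assume "x \<in> a ` {1..n} \<and> \<bar>x\<bar> = int i"
  then obtain j where "j \<in> {1..n}" "x = a j" "\<bar>a j\<bar> = int i" by auto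
  moreover from this have "\<bar>a j\<bar> = int j" using assms(1) by force
  ultimately show "x = a i" by auto
qed

lemma neg_perm_in_signed_perms:
  assumes "p \<in> signed_perms n"
  shows "neg_perm p \<in> signed_perms n"
proof -
  obtain S w where p: "p = (S, w)" by (cases p)
  from assms obtain a where a: "\<forall>i\<in>{1..n}. a i = int i \<or> a i = - int i" "S = a ` {1..n}"
    and w: "bij_betw w S S"
    unfolding p by (rule signed_permsE)
  have "uminus ` S = (\<lambda>i. - a i) ` {1..n}" using a(2) by auto
  then have "uminus ` S \<in> signed_sets n"
    unfolding signed_sets_def using a(1) by (intro CollectI exI[of _ "\<lambda>i. - a i"]) auto
  moreover have "bij_betw (\<lambda>x. if - x \<in> S then - w (- x) else x) (uminus ` S) (uminus ` S)"
  proof -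
    have neg: "bij_betw uminus T (uminus ` T)" for T :: "int set"
      by (simp add: bij_betw_def)
    have "bij_betw (uminus \<circ> w \<circ> uminus) (uminus ` S) (uminus ` S)"
      using neg[of "uminus ` S"] w neg[of S] by (auto simp: image_image intro: bij_betw_trans)
    then show ?thesis by (rule bij_betw_cong[THEN iffD1, rotated]) auto
  qed
  ultimately show ?thesis by (force simp: p signed_perms_def)
qed

lemma neg_perm_neg_perm:
  assumes "p \<in> signed_perms n"
  shows "neg_perm (neg_perm p) = p"
proof -
  obtain S w where p: "p = (S, w)" by (cases p)
  from assms obtain a where "\<forall>x. x \<notin> S \<longrightarrow> w x = x"
    unfolding p by (rule signed_permsE)
  then show ?thesis by (auto simp: p image_image fun_eq_iff image_iff)
qed

lemma letter_neg_perm: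
  assumes "p \<in> signed_perms n" and "i \<le> n"
  shows "letter (neg_perm p) i = - letter p i"
proof (cases "i = 0")
  case False
  obtain S w where p: "p = (S, w)" by (cases p)
  from assms(1) obtain a where a: "\<forall>i\<in>{1..n}. a i = int i \<or> a i = - int i" "S = a ` {1..n}"
    unfolding p by (rule signed_permsE)
  have i: "i \<in> {1..n}" using False assms(2) by auto
  have "uminus ` S = (\<lambda>i. - a i) ` {1..n}" using a(2) by auto
  moreover have "\<forall>i\<in>{1..n}. - a i = int i \<or> - a i = - int i" using a(1) by force
  ultimately have "sel (uminus ` S) i = - a i" using sel_image i by metis
  moreover have "sel S i = a i" using sel_image[OF a(1) i] a(2) by simp
  ultimately show ?thesis using False i a(2) by (simp add: letter_def p)
qed (simp add: letter_def)

lemma letter_Suc_neq: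
  assumes "p \<in> signed_perms n" and "i < n"
  shows "letter p i \<noteq> letter p (Suc i)"
proof -
  obtain S w where p: "p = (S, w)" by (cases p)
  from assms(1) obtain a where a: "\<forall>i\<in>{1..n}. a i = int i \<or> a i = - int i" "S = a ` {1..n}"
    and w: "bij_betw w S S"
    unfolding p by (rule signed_permsE)
  have sel: "sel S j = a j" if "j \<in> {1..n}" for j using sel_image[OF a(1) that] a(2) by simp
  have Suc_i: "Suc i \<in> {1..n}" "a (Suc i) \<in> S" using a(2) assms(2) by auto
  show ?thesis
  proof (cases "i = 0")
    case True
    have "w (a (Suc i)) \<in> S" using w Suc_i(2) by (auto simp: bij_betw_def)
    then have "w (a (Suc i)) \<noteq> 0" using a by force
    then show ?thesis using True sel[OF Suc_i(1)] by (simp add: letter_def p)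
  next
    case False
    then have i: "i \<in> {1..n}" "a i \<in> S" using a(2) assms(2) by auto
    have "\<bar>a i\<bar> = int i" "\<bar>a (Suc i)\<bar> = int (Suc i)" using a(1) i Suc_i by force+
    then have "a i \<noteq> a (Suc i)" by auto
    then have "w (a i) \<noteq> w (a (Suc i))"
      using w i(2) Suc_i(2) by (auto simp: bij_betw_def dest: inj_onD)
    then show ?thesis using False sel i Suc_i by (simp add: letter_def p)
  qed
qed

lemma desB_le: "desB n p \<le> n"
proof -
  have "desB n p \<le> card {0..<n}" unfolding desB_def by (rule card_mono) auto
  then show ?thesis by simp
qed

lemma desB_neg_perm:
  assumes "p \<in> signed_perms n"
  shows "desB n (neg_perm p) = n - desB n p"
proof -
  have "{i \<in> {0..<n}. letter (neg_perm p) i > letter (neg_perm p) (Suc i)}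
        = {0..<n} - {i \<in> {0..<n}. letter p i > letter p (Suc i)}"
    using letter_neg_perm[OF assms] letter_Suc_neq[OF assms] by fastforce
  also have "card \<dots> = card {0..<n} - card {i \<in> {0..<n}. letter p i > letter p (Suc i)}"
    by (rule card_Diff_subset) auto
  finally show ?thesis by (simp add: desB_def)
qed

lemma bij_betw_neg_perm_sign_last:
  "bij_betw neg_perm {p \<in> signed_perms n. letter p n > 0} {p \<in> signed_perms n. letter p n < 0}"
proof (rule bij_betw_byWitness[where f' = neg_perm])
  show "neg_perm ` {p \<in> signed_perms n. letter p n > 0} \<subseteq> {p \<in> signed_perms n. letter p n < 0}"
    using neg_perm_in_signed_perms letter_neg_perm by fastforce
  show "neg_perm ` {p \<in> signed_perms n. letter p n < 0} \<subseteq> {p \<in> signed_perms n. letter p n > 0}"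
    using neg_perm_in_signed_perms letter_neg_perm by fastforce
qed (auto simp: neg_perm_neg_perm simp del: neg_perm.simps)

theorem lemma7p1:
  fixes n :: nat and x :: real
  assumes "n \<ge> 1" and "x \<noteq> 0"
  shows "Bminus n x = x ^ n * Bplus n (1 / x)"
proof -
  let ?P = "{p \<in> signed_perms n. letter p n > 0}"
  have "Bminus n x = (\<Sum>p\<in>?P. x ^ desB n (neg_perm p))"
    unfolding Bminus_def by (rule sum.reindex_bij_betw[OF bij_betw_neg_perm_sign_last, symmetric])
  also have "\<dots> = (\<Sum>p\<in>?P. x ^ n * (1 / x) ^ desB n p)"
  proof (rule sum.cong[OF refl])
    fix p assume "p \<in> ?P"
    then have "desB n (neg_perm p) = n - desB n p" by (simp add: desB_neg_perm)
    moreover have "x ^ n = x ^ (n - desB n p) * x ^ desB n p"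
      using desB_le by (simp add: power_add[symmetric])
    ultimately show "x ^ desB n (neg_perm p) = x ^ n * (1 / x) ^ desB n p"
      using assms(2) by (simp add: power_one_over)
  qed
  also have "\<dots> = x ^ n * Bplus n (1 / x)" unfolding Bplus_def by (simp add: sum_distrib_left)
  finally show ?thesis .
qed

end
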